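(* Let $g(v;a)=v(1-v)(v-a)$, $k>0$, $a\in(0,1)$, and $$d_0(a,k)=\frac{1}{k+1}\min\{k\,d^+(a,k),\,d^-(a)\},\quad d^-(a)=\max_{y\in(a,1)}\frac{g(y;a)}{y},\quad d^+(a,k)=\max_{y\in(1-a,1)}\frac{-g(1-y;a)}{ky}.$$ Then for every $0<d<d_0(a,k)$ the following condition holds: with $h(v)=(k+1)v-\frac1d g(v;a)$, there exist $y_0\in(0,a)$ and $y_1\in(a,1)$ such that $h(y_0)>k+1$, $h(y_1)<0$, and $h'(v)>0$ for all $v\in(0,y_0)\cup(y_1,1)$. *)

theory Defs
  imports "HOL-Analysis.Analysis"
begin

definition g :: "real \<Rightarrow> real \<Rightarrow> real" where
  "g v a = v * (1 - v) * (v - a)"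

definition d_minus :: "real \<Rightarrow> real" where
  "d_minus a = (SUP y\<in>{a<..<1}. g y a / y)"

definition d_plus :: "real \<Rightarrow> real \<Rightarrow> real" where
  "d_plus a k = (SUP y\<in>{1-a<..<1}. - g (1 - y) a / (k * y))"

definition d0 :: "real \<Rightarrow> real \<Rightarrow> real" where
  "d0 a k = (1 / (k + 1)) * min (k * d_plus a k) (d_minus a)"

end

theory Submission
  imports Defs
begin

text \<open>
  Put \<open>c = d (k + 1)\<close>. By AM-GM, \<open>d\<^sup>- \<le> (1 - a)\<^sup>2 / 4\<close> and \<open>k d\<^sup>+ \<le> a\<^sup>2 / 4\<close>, so
  \<open>c < a\<^sup>2 / 4\<close> and \<open>c < (1 - a)\<^sup>2 / 4\<close>. In terms of \<open>c\<close>, \<open>h y\<^sub>0 > k + 1\<close> means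
  \<open>y\<^sub>0 (a - y\<^sub>0) > c\<close>, \<open>h y\<^sub>1 < 0\<close> means \<open>(1 - y\<^sub>1) (y\<^sub>1 - a) > c\<close>, and \<open>h' > 0\<close> means
  \<open>g' < c\<close>. Since \<open>g'\<close> is increasing on \<open>[0, a/2]\<close>, the point \<open>y\<^sub>0 = a/2 - (a\<^sup>2/4 - c)\<close>
  works near \<open>0\<close>. The reflection \<open>g (1 - v) (1 - a) = - g v a\<close> turns the
  condition near \<open>1\<close> into the one near \<open>0\<close> with \<open>a\<close> replaced by \<open>1 - a\<close>.
\<close>

definition g_deriv :: "real \<Rightarrow> real \<Rightarrow> real" where
  "g_deriv v a = 2 * (1 + a) * v - 3 * v\<^sup>2 - a"

lemma g_has_real_derivative: "((\<lambda>v. g v a) has_real_derivative g_deriv v a) (at v)"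
  unfolding g_def g_deriv_def
  by (rule derivative_eq_intros refl | simp add: algebra_simps power2_eq_square)+

lemma g_deriv_reflect: "g_deriv (1 - v) (1 - a) = g_deriv v a"
  by (simp add: g_deriv_def power2_eq_square algebra_simps)

lemma g_deriv_mono:
  assumes "v \<le> y" and "3 * (v + y) \<le> 2 * (1 + a)"
  shows "g_deriv v a \<le> g_deriv y a"
proof -
  have "g_deriv y a - g_deriv v a = (y - v) * (2 * (1 + a) - 3 * (v + y))"
    by (simp add: g_deriv_def power2_eq_square algebra_simps)
  also have "\<dots> \<ge> 0" using assms by simp
  finally show ?thesis by simp
qed

lemma mult_diff_le_quarter_square: "x * (b - x) \<le> b\<^sup>2 / (4::real)"
proof -
  have "b\<^sup>2 / 4 - x * (b - x) = (x - b / 2)\<^sup>2"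
    by (simp add: power2_eq_square field_simps)
  then show ?thesis by (metis diff_ge_0_iff_ge zero_le_power2)
qed

lemma d_minus_le:
  assumes "0 < a" and "a < 1"
  shows "d_minus a \<le> (1 - a)\<^sup>2 / 4"
  unfolding d_minus_def
proof (rule cSUP_least)
  show "{a<..<1} \<noteq> {}" using assms by simp
next
  fix y assume "y \<in> {a<..<1}"
  then have "g y a / y = (1 - y) * ((1 - a) - (1 - y))"
    using assms by (simp add: g_def)
  then show "g y a / y \<le> (1 - a)\<^sup>2 / 4"
    using mult_diff_le_quarter_square[of "1 - y" "1 - a"] by simp
qed

lemma d_plus_le:
  assumes "0 < k" and "0 < a" and "a < 1"
  shows "k * d_plus a k \<le> a\<^sup>2 / 4"
proof -
  have "d_plus a k \<le> a\<^sup>2 / 4 / k"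
    unfolding d_plus_def
  proof (rule cSUP_least)
    show "{1 - a<..<1} \<noteq> {}" using assms by simp
  next
    fix y assume "y \<in> {1 - a<..<1}"
    then have "- g (1 - y) a / (k * y) = (1 - y) * (a - (1 - y)) / k"
      using assms by (simp add: g_def field_simps)
    moreover have "(1 - y) * (a - (1 - y)) / k \<le> a\<^sup>2 / 4 / k"
      using assms(1) by (intro divide_right_mono mult_diff_le_quarter_square) simp
    ultimately show "- g (1 - y) a / (k * y) \<le> a\<^sup>2 / 4 / k"
      by simp
  qed
  then show ?thesis using assms(1) by (simp add: field_simps)
qed

lemma g_deriv_below_near_zero:
  assumes "0 < a" and "a < 1" and "0 < c" and "c < a\<^sup>2 / 4"
  shows "\<exists>y \<in> {0<..<a}. c < y * (a - y) \<and> (\<forall>v \<in> {0<..<y}. g_deriv v a < c)"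
proof -
  define s where "s = a\<^sup>2 / 4 - c"
  define y where "y = a / 2 - s"
  have "a\<^sup>2 < a" using assms(1,2) by (simp add: power2_eq_square)
  then have s: "0 < s" "s < a / 4" "s < 1"
    using assms by (auto simp: s_def)
  then have y: "y \<in> {0<..<a}" "y < a / 2"
    using assms(1) by (auto simp: y_def)
  have "y * (a - y) = a\<^sup>2 / 4 - s * s"
    unfolding y_def by (simp add: power2_eq_square field_simps)
  also have "\<dots> = c + (s - s * s)"
    by (simp add: s_def)
  moreover have "s * s < s" using s by simp
  ultimately have "c < y * (a - y)"
    by simp
  moreover have "g_deriv y a < c"
  proof -
    have "g_deriv y a = a\<^sup>2 / 4 - s * s - 2 * (1 - y) * s"
      by (simp add: g_deriv_def y_def power2_eq_square algebra_simps)
    moreover have "s < 2 * (1 - y) * s"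
      using s y assms(2) by simp
    moreover have "c = a\<^sup>2 / 4 - s" and "0 < s * s"
      using s by (simp_all add: s_def)
    ultimately show ?thesis
      by linarith
  qed
  moreover have "g_deriv v a < c" if "v \<in> {0<..<y}" for v
    using that y assms g_deriv_mono[of v y a] \<open>g_deriv y a < c\<close> by simp
  ultimately show ?thesis using y by blast
qed

lemma deriv_h:
  "deriv (\<lambda>v. (k + 1) * v - (1 / d) * g v a) v = (k + 1) - g_deriv v a / d"
  by (rule DERIV_imp_deriv)
     (rule derivative_eq_intros g_has_real_derivative refl | simp)+

theorem lemma8p4:
  fixes a k d :: real
  assumes "k > 0" and "0 < a" and "a < 1"
    and "0 < d" and "d < d0 a k"
  defines "h \<equiv> (\<lambda>v. (k + 1) * v - (1 / d) * g v a)"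
  shows "\<exists>y0 y1. y0 \<in> {0<..<a} \<and> y1 \<in> {a<..<1} \<and> h y0 > k + 1 \<and> h y1 < 0 \<and>
           (\<forall>v \<in> {0<..<y0} \<union> {y1<..<1}. deriv h v > 0)"
proof -
  define c where "c = d * (k + 1)"
  have c_pos: "0 < c" using assms by (simp add: c_def)
  have c_lt: "c < a\<^sup>2 / 4" "c < (1 - a)\<^sup>2 / 4"
    using assms d_plus_le[OF assms(1-3)] d_minus_le[OF assms(2,3)]
    by (auto simp: c_def d0_def field_simps)
  obtain y0 where y0: "y0 \<in> {0<..<a}" "c < y0 * (a - y0)"
    and left: "\<And>v. v \<in> {0<..<y0} \<Longrightarrow> g_deriv v a < c"
    using g_deriv_below_near_zero[OF assms(2,3) c_pos c_lt(1)] by blast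
  obtain w where w: "w \<in> {0<..<1 - a}" "c < w * ((1 - a) - w)"
    and right: "\<And>v. v \<in> {0<..<w} \<Longrightarrow> g_deriv v (1 - a) < c"
    using g_deriv_below_near_zero[of "1 - a" c] assms(2,3) c_pos c_lt(2) by auto
  have deriv_pos: "deriv h v > 0 \<longleftrightarrow> g_deriv v a < c" for v
    using assms(4) unfolding h_def deriv_h by (simp add: c_def field_simps)
  have "h y0 - (k + 1) = (1 - y0) * (y0 * (a - y0) - c) / d"
    using assms(4) by (simp add: h_def g_def c_def field_simps)
  moreover have "0 < (1 - y0) * (y0 * (a - y0) - c) / d"
    using y0 assms(3,4) by (intro divide_pos_pos mult_pos_pos) auto
  ultimately have h_y0: "h y0 > k + 1"
    by linarith
  have "h (1 - w) = - ((1 - w) * (w * ((1 - a) - w) - c) / d)"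
    using assms(4) by (simp add: h_def g_def c_def field_simps)
  moreover have "0 < (1 - w) * (w * ((1 - a) - w) - c) / d"
    using w assms(2,4) by (intro divide_pos_pos mult_pos_pos) auto
  ultimately have h_y1: "h (1 - w) < 0"
    by linarith
  have "deriv h v > 0" if "v \<in> {0<..<y0} \<union> {1 - w<..<1}" for v
    using that left right[of "1 - v"] deriv_pos g_deriv_reflect[of v a] by auto
  then show ?thesis
    using y0 w h_y0 h_y1 by (intro exI[of _ y0] exI[of _ "1 - w"]) auto
qed

end
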